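(* Let $\mathbb{X}$ be a Banach space, $\varphi:\mathbb{X}\to\mathbb{R}\cup\{+\infty\}$ a proper lower semicontinuous function, $\mathbf{S}_\varphi:=\{x:\varphi(x)\le0\}$ and $\bar x\in\mathbf{S}_\varphi$. Suppose that ${\rm bd}(\mathbf{S}_\varphi)\subseteq\varphi^{-1}(0)$, that $\varphi$ has the epigraphical Shapiro first order contact property at $\bar x$, and that $\mathbf{S}_\varphi$ has the Shapiro first order contact property around $\bar x$. Then the inequality $\varphi(x)\le0$ has a local error bound at $\bar x$ if and only if $$\limsup_{x\xrightarrow{{\rm bd}(\mathbf{S}_\varphi)}\bar x}\mathbf{e}\big(\{h\in\mathbb{X}:\varphi'_H(x;h)\le1\},\ \mathbf{T}^{\mathbf B}(\mathbf{S}_\varphi,x)\big)<+\infty.$$ Moreover, $$\tau(\mathbf{S}_\varphi,\bar x)=\limsup_{x\xrightarrow{{\rm bd}(\mathbf{S}_\varphi)}\bar x}\mathbf{e}\big(\{h\in\mathbb{X}:\varphi'_H(x;h)\le1\},\ \mathbf{T}^{\mathbf B}(\mathbf{S}_\varphi,x)\big).$$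
   Context: $\mathbf{B}(a,\delta)$ is the open ball with center $a$ and radius $\delta$; ${\rm bd}$ denotes boundary; $\mathbf{d}(x,D):=\inf\{\|x-y\|:y\in D\}$. Excess: $\mathbf{e}(C,D):=\sup_{x\in C}\mathbf{d}(x,D)$, with $\mathbf{e}(\emptyset,D)=0$ if $D\neq\emptyset$ and $=\infty$ otherwise. $\varphi'_H(x;h):=\liminf_{t\to0^+,\,h'\to h}\frac{\varphi(x+th')-\varphi(x)}{t}$ (lower Hadamard directional derivative). Bouligand tangent cone $\mathbf{T}^{\mathbf B}(C,c)$: all $v$ with $v_n\to v$, $t_n\downarrow0$, $c+t_nv_n\in C$. A closed set $C$ has the Shapiro first order contact property at $a\in C$ if for every $\varepsilon>0$ there is $\delta>0$ with $\mathbf{d}(x-u,\mathbf{T}^{\mathbf B}(C,u))\le\varepsilon\|x-u\|$ for all $x,u\in C\cap\mathbf{B}(a,\delta)$; around $\bar x$ means at every point of $C\cap U$ for some neighborhood $U$ of $\bar x$. Epigraphical Shapiro first order contact property at $\bar x$: ${\rm epi}(\varphi)\subseteq\mathbb{X}\times\mathbb{R}$ (norm $\|x\|+|\alpha|$) has the Shapiro first order contact property at $(\bar x,\varphi(\bar x))$. Local error bound at $\bar x$: there exist $\tau,\delta>0$ with $\mathbf{d}(x,\mathbf{S}_\varphi)\le\tau\max\{\varphi(x),0\}$ for all $x\in\mathbf{B}(\bar x,\delta)$; the modulus $\tau(\mathbf{S}_\varphi,\bar x)$ is the infimum of all $\tau>0$ for which such a $\delta$ exists (with $\inf\emptyset=+\infty$).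 $\limsup_{x\xrightarrow{D}\bar x}F(x):=\lim_{\delta\downarrow0}\sup\{F(x):x\in D\cap\mathbf{B}(\bar x,\delta)\}$, with the convention $\sup\emptyset=0$. *)

theory Defs
  imports "HOL-Analysis.Analysis"
begin

definition lsc :: "('a::topological_space \<Rightarrow> ereal) \<Rightarrow> bool" where
  "lsc \<phi> \<longleftrightarrow> (\<forall>x. \<phi> x \<le> Liminf (at x) \<phi>)"

definition proper_fun :: "('a \<Rightarrow> ereal) \<Rightarrow> bool" where
  "proper_fun \<phi> \<longleftrightarrow> (\<forall>x. \<phi> x \<noteq> -\<infinity>) \<and> (\<exists>x. \<phi> x \<noteq> \<infinity>)"

definition sublevel0 :: "('a \<Rightarrow> ereal) \<Rightarrow> 'a set" where
  "sublevel0 \<phi> = {x. \<phi> x \<le> 0}"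

(* excess e(C,D) = sup_{x in C} d(x,D); e(\<emptyset>,D) = 0 if D \<noteq> \<emptyset>, = \<infinity> otherwise;
   for D = \<emptyset>, d(x,\<emptyset>) = inf \<emptyset> = \<infinity>, so e(C,\<emptyset>) = \<infinity> *)
definition excess :: "'a::metric_space set \<Rightarrow> 'a set \<Rightarrow> ereal" where
  "excess C D = (if D = {} then \<infinity> else if C = {} then 0
                 else (SUP x\<in>C. ereal (infdist x D)))"

definition hadamard_dd :: "('a::real_normed_vector \<Rightarrow> ereal) \<Rightarrow> 'a \<Rightarrow> 'a \<Rightarrow> ereal" where
  "hadamard_dd \<phi> x h =
     Liminf (at_right (0::real) \<times>\<^sub>F nhds h)
       (\<lambda>(t, h'). (\<phi> (x + t *\<^sub>R h') - \<phi> x) / ereal t)"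

definition bouligand_cone :: "'a::real_normed_vector set \<Rightarrow> 'a \<Rightarrow> 'a set" where
  "bouligand_cone C c = {v. \<exists>vs ts. vs \<longlonglongrightarrow> v \<and> ts \<longlonglongrightarrow> 0 \<and> (\<forall>n. ts n > 0)
                                 \<and> (\<forall>n. c + ts n *\<^sub>R vs n \<in> C)}"

definition shapiro_at :: "'a::real_normed_vector set \<Rightarrow> 'a \<Rightarrow> bool" where
  "shapiro_at C a \<longleftrightarrow> closed C \<and> a \<in> C \<and>
     (\<forall>\<epsilon>>0. \<exists>\<delta>>0. \<forall>x\<in>C \<inter> ball a \<delta>. \<forall>u\<in>C \<inter> ball a \<delta>.
        infdist (x - u) (bouligand_cone C u) \<le> \<epsilon> * norm (x - u))"

definition shapiro_around :: "'a::real_normed_vector set \<Rightarrow> 'a \<Rightarrow> bool" where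
  "shapiro_around C a \<longleftrightarrow> (\<exists>U. open U \<and> a \<in> U \<and> (\<forall>u\<in>C \<inter> U. shapiro_at C u))"

definition epi :: "('a \<Rightarrow> ereal) \<Rightarrow> ('a \<times> real) set" where
  "epi \<phi> = {(x, \<alpha>). \<phi> x \<le> ereal \<alpha>}"

definition sum_norm :: "'a::real_normed_vector \<times> real \<Rightarrow> real" where
  "sum_norm p = norm (fst p) + \<bar>snd p\<bar>"

definition epi_shapiro_at :: "('a::real_normed_vector \<Rightarrow> ereal) \<Rightarrow> 'a \<Rightarrow> bool" where
  "epi_shapiro_at \<phi> xb \<longleftrightarrow>
     (let E = epi \<phi>; c = (xb, real_of_ereal (\<phi> xb)) in
      closed E \<and> \<bar>\<phi> xb\<bar> \<noteq> \<infinity> \<and>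
      (\<forall>\<epsilon>>0. \<exists>\<delta>>0. \<forall>p\<in>E. \<forall>q\<in>E. sum_norm (p - c) < \<delta> \<longrightarrow> sum_norm (q - c) < \<delta> \<longrightarrow>
          (INF w\<in>bouligand_cone E q. sum_norm (p - q - w)) \<le> \<epsilon> * sum_norm (p - q)))"

definition error_bound_with :: "('a::real_normed_vector \<Rightarrow> ereal) \<Rightarrow> 'a \<Rightarrow> real \<Rightarrow> bool" where
  "error_bound_with \<phi> xb \<tau> \<longleftrightarrow> (\<exists>\<delta>>0. \<forall>x\<in>ball xb \<delta>.
      ereal (infdist x (sublevel0 \<phi>)) \<le> ereal \<tau> * max (\<phi> x) 0)"

definition local_error_bound :: "('a::real_normed_vector \<Rightarrow> ereal) \<Rightarrow> 'a \<Rightarrow> bool" where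
  "local_error_bound \<phi> xb \<longleftrightarrow> (\<exists>\<tau>>0. error_bound_with \<phi> xb \<tau>)"

(* modulus: infimum of admissible \<tau> > 0, inf \<emptyset> = +\<infinity> *)
definition eb_modulus :: "('a::real_normed_vector \<Rightarrow> ereal) \<Rightarrow> 'a \<Rightarrow> ereal" where
  "eb_modulus \<phi> xb = Inf (ereal ` {\<tau>. \<tau> > 0 \<and> error_bound_with \<phi> xb \<tau>})"

(* limsup_{x \<rightarrow>_D xbar} F(x) := lim_{\<delta>\<down>0} sup {F x : x \<in> D \<inter> B(xbar,\<delta>)}, sup \<emptyset> = 0.
   The inner quantity is monotone in \<delta> for nonnegative F, so the limit is the infimum. *)
definition limsup_within :: "'a::metric_space set \<Rightarrow> 'a \<Rightarrow> ('a \<Rightarrow> ereal) \<Rightarrow> ereal" where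
  "limsup_within D xb F = (INF \<delta>\<in>{0<..}.
      (if D \<inter> ball xb \<delta> = {} then 0 else (SUP x\<in>D \<inter> ball xb \<delta>. F x)))"

end

theory Submission
  imports Defs
begin

text \<open>Necessity: let \<open>\<phi>\<close> satisfy an error bound with constant \<open>\<tau>\<close> near \<open>xb\<close>. At a boundary
  point \<open>x\<close>, a direction \<open>h\<close> with \<open>\<phi>'(x; h) \<le> 1\<close> yields points \<open>x + t h'\<close> with \<open>\<phi> \<le> (1 + \<epsilon>) t\<close>;
  the error bound puts points of \<open>S\<close> within about \<open>\<tau> t\<close> of them, and Shapiro's property of
  \<open>S\<close> makes the corresponding difference quotients nearly tangent, so \<open>d(h, T(S, x)) \<le> \<tau>\<close>.

  Sufficiency: suppose the excess stays below \<open>L < \<tau>\<close> near \<open>xb\<close> but \<open>d(x, S) > \<tau> \<phi>(x)\<close>.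
  Ekeland's principle gives an almost nearest point \<open>s\<close> of \<open>S\<close> to \<open>x\<close>, which lies on the
  boundary. Shapiro's property of the epigraph gives a tangent vector \<open>(h, \<alpha>)\<close> of \<open>epi \<phi>\<close> at
  \<open>(s, 0)\<close> close to \<open>(x - s, \<phi>(x))\<close>; then \<open>\<phi>'(s; h / \<beta>) \<le> 1\<close> for some \<open>\<beta> \<approx> \<phi>(x)\<close>, so
  \<open>d(x - s, T(S, s)) \<lesssim> L \<phi>(x)\<close>. But at an almost nearest point tangent vectors keep a distance
  of almost \<open>\<parallel>x - s\<parallel>\<close> from \<open>x - s\<close>, whence \<open>d(x, S) \<le> \<parallel>x - s\<parallel> \<lesssim> L \<phi>(x) < \<tau> \<phi>(x)\<close>.\<close>

section \<open>Tangent cones, excess and directional derivatives\<close>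

lemma Liminf_filter_antimono:
  fixes f :: "'b \<Rightarrow> 'c::{complete_linorder,dense_linorder}"
  assumes "G \<le> F"
  shows "Liminf F f \<le> Liminf G f"
proof -
  have "\<forall>y<Liminf F f. \<forall>\<^sub>F x in G. y < f x"
    using le_Liminf_iff[of "Liminf F f" F f] assms filter_leD by blast
  then show ?thesis using le_Liminf_iff by blast
qed

lemma closed_sublevel0:
  assumes "lsc \<phi>"
  shows "closed (sublevel0 \<phi>)"
  unfolding closed_def open_subopen[of "- sublevel0 \<phi>"]
proof
  fix x assume "x \<in> - sublevel0 \<phi>"
  then have x0: "0 < \<phi> x" by (auto simp: sublevel0_def)
  have "\<phi> x \<le> Liminf (at x) \<phi>" using assms by (auto simp: lsc_def)
  then have "\<forall>\<^sub>F y in at x. 0 < \<phi> y" using le_Liminf_iff x0 by blast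
  then obtain U where "open U" "x \<in> U" "\<And>y. y \<in> U \<Longrightarrow> y \<noteq> x \<Longrightarrow> 0 < \<phi> y"
    unfolding eventually_at_topological by blast
  with x0 show "\<exists>T. open T \<and> x \<in> T \<and> T \<subseteq> - sublevel0 \<phi>"
    by (intro exI[of _ U]) (force simp: sublevel0_def not_le)
qed

lemma zero_in_bouligand_cone:
  assumes "c \<in> C"
  shows "0 \<in> bouligand_cone C c"
  unfolding bouligand_cone_def
proof (intro CollectI exI conjI allI)
  show "(\<lambda>n. 1 / (real n + 1)) \<longlonglongrightarrow> 0"
    using LIMSEQ_inverse_real_of_nat by (simp add: divide_inverse add.commute)
qed (use assms in auto)

lemma bouligand_cone_nonempty: "c \<in> C \<Longrightarrow> bouligand_cone C c \<noteq> {}"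
  using zero_in_bouligand_cone by blast

lemma bouligand_cone_scaleR:
  assumes "v \<in> bouligand_cone C c" "k > 0"
  shows "k *\<^sub>R v \<in> bouligand_cone C c"
proof -
  obtain vs ts where v: "vs \<longlonglongrightarrow> v" "ts \<longlonglongrightarrow> 0" "\<forall>n. ts n > 0" "\<forall>n. c + ts n *\<^sub>R vs n \<in> C"
    using assms(1) by (auto simp: bouligand_cone_def)
  show ?thesis unfolding bouligand_cone_def
  proof (intro CollectI exI conjI allI)
    show "(\<lambda>n. k *\<^sub>R vs n) \<longlonglongrightarrow> k *\<^sub>R v" by (intro tendsto_intros v)
    show "(\<lambda>n. ts n / k) \<longlonglongrightarrow> 0" using tendsto_divide_zero[OF v(2)] .
  qed (use v assms in auto)
qed

lemma infdist_less_obtain: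
  assumes "A \<noteq> {}" "e > 0"
  obtains a where "a \<in> A" "dist x a < infdist x A + e"
proof -
  have "(INF a\<in>A. dist x a) < infdist x A + e" using assms by (simp add: infdist_notempty)
  moreover have "bdd_below ((\<lambda>a. dist x a) ` A)" by (auto intro!: bdd_belowI[of _ 0])
  ultimately show ?thesis using cINF_less_iff[OF assms(1)] that by blast
qed

lemma infdist_cone_scaleR_le:
  fixes T :: "'a::real_normed_vector set"
  assumes cone: "\<And>w k. w \<in> T \<Longrightarrow> k > 0 \<Longrightarrow> k *\<^sub>R w \<in> T" and "T \<noteq> {}" "k > 0"
  shows "infdist (k *\<^sub>R v) T \<le> k * infdist v T"
proof (rule field_le_epsilon)
  fix e :: real assume "0 < e"
  then obtain w where w: "w \<in> T" "dist v w < infdist v T + e / k"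
    using infdist_less_obtain[OF \<open>T \<noteq> {}\<close>, of "e / k" v] \<open>k > 0\<close> by auto
  have "infdist (k *\<^sub>R v) T \<le> dist (k *\<^sub>R v) (k *\<^sub>R w)" using cone[OF w(1) \<open>k > 0\<close>] by (rule infdist_le)
  also have "\<dots> = k * dist v w" using \<open>k > 0\<close> by (simp add: dist_norm scaleR_diff_right[symmetric])
  also have "\<dots> \<le> k * infdist v T + e" using w \<open>k > 0\<close> by (simp add: field_simps)
  finally show "infdist (k *\<^sub>R v) T \<le> k * infdist v T + e" .
qed

lemma infdist_bouligand_cone_scaleR_le:
  assumes "c \<in> C" "k > 0"
  shows "infdist (k *\<^sub>R v) (bouligand_cone C c) \<le> k * infdist v (bouligand_cone C c)"
  using assms by (intro infdist_cone_scaleR_le bouligand_cone_scaleR bouligand_cone_nonempty)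

lemma excess_nonneg: "0 \<le> excess C D"
proof -
  have "0 \<le> (SUP x\<in>C. ereal (infdist x D))" if "x \<in> C" for x
    using that infdist_nonneg[of x D] by (intro SUP_upper2) auto
  then show ?thesis by (auto simp: excess_def)
qed

lemma infdist_le_excess:
  assumes "h \<in> C" "D \<noteq> {}"
  shows "ereal (infdist h D) \<le> excess C D"
  using assms by (auto simp: excess_def intro: SUP_upper)

lemma excess_le:
  assumes "D \<noteq> {}" "\<And>h. h \<in> C \<Longrightarrow> infdist h D \<le> b" "0 \<le> b"
  shows "excess C D \<le> ereal b"
  using assms by (auto simp: excess_def intro!: SUP_least)

lemma limsup_within_nonneg:
  assumes "\<And>x. 0 \<le> F x"
  shows "0 \<le> limsup_within D xb F"
  unfolding limsup_within_def by (rule INF_greatest) (auto intro: SUP_upper2 assms)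

lemma limsup_within_le:
  assumes "\<delta> > 0" "\<And>x. x \<in> D \<inter> ball xb \<delta> \<Longrightarrow> F x \<le> c" "0 \<le> c"
  shows "limsup_within D xb F \<le> c"
proof -
  have "limsup_within D xb F \<le>
      (if D \<inter> ball xb \<delta> = {} then 0 else (SUP x\<in>D \<inter> ball xb \<delta>. F x))"
    unfolding limsup_within_def using assms(1) by (intro INF_lower) simp
  also have "\<dots> \<le> c" using assms by (auto intro: SUP_least)
  finally show ?thesis .
qed

lemma limsup_within_less_obtain:
  assumes "limsup_within D xb F < c"
  obtains \<delta> where "\<delta> > 0" "\<And>x. x \<in> D \<inter> ball xb \<delta> \<Longrightarrow> F x < c"
proof -
  obtain \<delta> where "\<delta> > 0"
    and \<delta>: "(if D \<inter> ball xb \<delta> = {} then 0 else (SUP x\<in>D \<inter> ball xb \<delta>. F x)) < c"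
    using assms unfolding limsup_within_def INF_less_iff by auto
  have "F x < c" if x: "x \<in> D \<inter> ball xb \<delta>" for x
  proof -
    have "F x \<le> (SUP x\<in>D \<inter> ball xb \<delta>. F x)" using x by (rule SUP_upper)
    also have "\<dots> < c" using \<delta> x by (auto split: if_splits)
    finally show ?thesis .
  qed
  with \<open>\<delta> > 0\<close> show ?thesis using that by blast
qed

lemma hadamard_dd_le_of_epi_tangent:
  fixes \<phi> :: "'a::real_normed_vector \<Rightarrow> ereal"
  assumes s: "\<phi> s = 0" and tangent: "(h, \<alpha>) \<in> bouligand_cone (epi \<phi>) (s, 0)"
  shows "hadamard_dd \<phi> s h \<le> ereal \<alpha>"
proof -
  obtain ws ts where ws: "ws \<longlonglongrightarrow> (h, \<alpha>)" and ts: "ts \<longlonglongrightarrow> 0" "\<forall>n. ts n > 0"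
    and in_epi: "\<forall>n. (s, 0) + ts n *\<^sub>R ws n \<in> epi \<phi>"
    using tangent by (auto simp: bouligand_cone_def)
  define f where "f = (\<lambda>(t::real, h'). (\<phi> (s + t *\<^sub>R h') - \<phi> s) / ereal t)"
  define g where "g n = (ts n, fst (ws n))" for n
  have "filterlim ts (at_right 0) sequentially"
    using ts by (intro tendsto_imp_filterlim_at_right) auto
  then have lim: "filterlim g (at_right 0 \<times>\<^sub>F nhds h) sequentially"
    unfolding g_def using tendsto_fst[OF ws] by (intro filterlim_Pair) auto
  have "f (g n) \<le> ereal (snd (ws n))" for n
  proof -
    have "\<phi> (s + ts n *\<^sub>R fst (ws n)) \<le> ereal (ts n * snd (ws n))"
      using in_epi[rule_format, of n] by (cases "ws n") (simp add: epi_def)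
    then have "\<phi> (s + ts n *\<^sub>R fst (ws n)) / ereal (ts n) \<le> ereal (ts n * snd (ws n)) / ereal (ts n)"
      using ts(2) by (intro ereal_divide_right_mono) auto
    also have "\<dots> = ereal (snd (ws n))" using ts(2)[rule_format, of n] by (simp add: ereal_divide)
    finally show ?thesis by (simp add: f_def g_def s)
  qed
  have "hadamard_dd \<phi> s h \<le> Liminf (filtermap g sequentially) f"
    unfolding hadamard_dd_def f_def[symmetric]
    using lim unfolding filterlim_def by (rule Liminf_filter_antimono)
  also have "\<dots> \<le> Liminf sequentially (\<lambda>n. f (g n))" by (rule Liminf_filtermap_le)
  also have "\<dots> \<le> Liminf sequentially (\<lambda>n. ereal (snd (ws n)))"
    by (rule Liminf_mono) (simp add: \<open>\<And>n. f (g n) \<le> ereal (snd (ws n))\<close>)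
  also have "\<dots> = ereal \<alpha>"
    using tendsto_snd[OF ws] by (intro lim_imp_Liminf) auto
  finally show ?thesis .
qed

lemma hadamard_dd_less_obtain:
  fixes \<phi> :: "'a::real_normed_vector \<Rightarrow> ereal"
  assumes "hadamard_dd \<phi> x h < c" "\<rho> > 0" "\<epsilon> > 0"
  obtains t h' where "0 < t" "t < \<rho>" "dist h' h < \<epsilon>" "(\<phi> (x + t *\<^sub>R h') - \<phi> x) / ereal t < c"
proof -
  define f where "f = (\<lambda>(t::real, h'). (\<phi> (x + t *\<^sub>R h') - \<phi> x) / ereal t)"
  let ?F = "at_right (0::real) \<times>\<^sub>F nhds h"
  have "\<not> c \<le> Liminf ?F f" using assms(1) by (simp add: hadamard_dd_def f_def not_le)
  then obtain y where "y < c" and freq: "\<exists>\<^sub>F p in ?F. f p \<le> y"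
    unfolding le_Liminf_iff by (auto simp: not_eventually not_less)
  from freq have "\<exists>\<^sub>F p in ?F. f p < c"
    by (rule frequently_elim1) (use \<open>y < c\<close> in auto)
  moreover have "\<forall>\<^sub>F p in ?F. 0 < fst p \<and> fst p < \<rho> \<and> dist (snd p) h < \<epsilon>"
    unfolding eventually_prod_filter
  proof (intro exI conjI allI impI)
    show "\<forall>\<^sub>F t in at_right (0::real). t \<in> {0<..<\<rho>}" using eventually_at_right_real[OF assms(2)] .
    show "\<forall>\<^sub>F h' in nhds h. dist h' h < \<epsilon>" using assms(3) by (auto simp: eventually_nhds_metric)
  qed auto
  ultimately obtain t h' where "f (t, h') < c" "0 < t" "t < \<rho>" "dist h' h < \<epsilon>"
    using frequently_ex[OF frequently_eventually_frequently] by fastforce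
  then show ?thesis using that by (simp add: f_def)
qed

section \<open>Ekeland's principle and almost nearest points\<close>

lemma Cauchy_if_dist_le_null:
  assumes "\<And>m n. n \<le> m \<Longrightarrow> dist (X m) (X n) \<le> b n" and "b \<longlonglongrightarrow> 0"
  shows "Cauchy X"
  unfolding Cauchy_altdef2
proof (intro allI impI)
  fix e :: real assume "e > 0"
  then have "\<forall>\<^sub>F n in sequentially. b n < e" using \<open>b \<longlonglongrightarrow> 0\<close> by (rule order_tendstoD(2)[rotated])
  then obtain N where "b N < e" by (auto simp: eventually_sequentially)
  with assms(1) show "\<exists>N. \<forall>n\<ge>N. dist (X n) (X N) < e" by (meson le_less_trans)
qed

text \<open>The point is the limit of a sequence of almost-minimisers of \<open>f\<close> over the nested closed
  sets \<open>P w\<close> of points that improve on \<open>w\<close> by at least \<open>\<eta>\<close> times their distance.\<close>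

lemma ekeland_variational_principle:
  fixes S :: "'a::complete_space set" and f :: "'a \<Rightarrow> real"
  assumes S: "closed S" "z \<in> S" and f: "continuous_on S f" "\<And>y. y \<in> S \<Longrightarrow> b \<le> f y"
    and "\<eta> > 0"
  obtains s where "s \<in> S" "f s \<le> f z" "\<And>y. y \<in> S \<Longrightarrow> f s \<le> f y + \<eta> * dist y s"
proof -
  define P where "P w = {y\<in>S. f y + \<eta> * dist y w \<le> f w}" for w
  have P_refl: "w \<in> P w" if "w \<in> S" for w using that by (simp add: P_def)
  have P_trans: "y \<in> P u" if "y \<in> P w" "w \<in> P u" for y w u
  proof -
    have "\<eta> * dist y u \<le> \<eta> * dist y w + \<eta> * dist w u"
      using \<open>\<eta> > 0\<close> dist_triangle[of y u w] by (simp add: distrib_left[symmetric])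
    then show ?thesis using that by (auto simp: P_def)
  qed
  have P_closed: "closed (P w)" for w
    unfolding P_def using S f by (intro continuous_on_closed_Collect_le continuous_intros) auto
  have bdd: "bdd_below (f ` P w)" for w using f by (auto simp: P_def intro!: bdd_belowI[of _ b])
  have "\<exists>y. y \<in> P w \<and> f y \<le> (INF q\<in>P w. f q) + 1/2^n" if w: "w \<in> S" for w n
  proof -
    have "(INF q\<in>P w. f q) < (INF q\<in>P w. f q) + 1/2^n" by simp
    then obtain y where "y \<in> P w" "f y < (INF q\<in>P w. f q) + 1/2^n"
      using cINF_less_iff[OF _ bdd] P_refl[OF w] by blast
    then show ?thesis by (auto intro: less_imp_le)
  qed
  then obtain nxt where nxt: "\<And>w n. w \<in> S \<Longrightarrow> nxt w n \<in> P w \<and> f (nxt w n) \<le> (INF q\<in>P w. f q) + 1/2^n"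
    by metis
  define zs where "zs = rec_nat z (\<lambda>n w. nxt w n)"
  have zs_S: "zs n \<in> S" for n
    by (induction n) (use S nxt in \<open>auto simp: zs_def P_def\<close>)
  have step: "zs (Suc n) \<in> P (zs n)" "f (zs (Suc n)) \<le> (INF q\<in>P (zs n). f q) + 1/2^n" for n
    using nxt[OF zs_S[of n]] by (auto simp: zs_def)
  have nested: "zs m \<in> P (zs n)" if "n \<le> m" for m n
    using that
  proof (induction m rule: dec_induct)
    case base show ?case using P_refl zs_S by blast
  next
    case (step m) then show ?case using P_trans \<open>zs (Suc m) \<in> P (zs m)\<close> by blast
  qed
  have small: "\<eta> * dist y (zs (Suc n)) \<le> 1/2^n" if y: "y \<in> P (zs (Suc n))" for y n
  proof -
    have "(INF q\<in>P (zs n). f q) \<le> f y" using P_trans[OF y step(1)] by (rule cINF_lower[OF bdd])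
    with step(2)[of n] y show ?thesis by (auto simp: P_def)
  qed
  have "Cauchy (\<lambda>n. zs (Suc n))"
  proof (rule Cauchy_if_dist_le_null)
    show "dist (zs (Suc m)) (zs (Suc n)) \<le> 1/\<eta> * (1/2)^n" if "n \<le> m" for m n
      using small[OF nested] that \<open>\<eta> > 0\<close> by (simp add: field_simps power_divide)
    show "(\<lambda>n. 1/\<eta> * (1/2::real)^n) \<longlonglongrightarrow> 0" by (intro tendsto_mult_right_zero LIMSEQ_power_zero) auto
  qed
  then obtain s where lim: "(\<lambda>n. zs (Suc n)) \<longlonglongrightarrow> s" using Cauchy_convergent convergent_def by blast
  have s_P: "s \<in> P (zs n)" for n
    by (rule Lim_in_closed_set[OF P_closed _ _ lim]) (auto simp: eventually_sequentially intro!: exI[of _ n] nested)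
  have "f s \<le> f y + \<eta> * dist y s" if "y \<in> S" for y
  proof (rule ccontr)
    assume "\<not> ?thesis"
    then have "y \<in> P s" using that by (simp add: P_def)
    then have y_P: "y \<in> P (zs n)" for n using s_P by (rule P_trans)
    have "(\<lambda>n. zs (Suc n)) \<longlonglongrightarrow> y"
    proof (rule tendsto_dist_iff[THEN iffD2], rule Lim_null_comparison)
      show "\<forall>\<^sub>F n in sequentially. norm (dist (zs (Suc n)) y) \<le> 1/\<eta> * (1/2)^n"
        using small[OF y_P] \<open>\<eta> > 0\<close> by (simp add: field_simps dist_commute power_divide)
      show "(\<lambda>n. 1/\<eta> * (1/2::real)^n) \<longlonglongrightarrow> 0"
        by (intro tendsto_mult_right_zero LIMSEQ_power_zero) auto
    qed
    with lim have "y = s" using LIMSEQ_unique by blast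
    with \<open>\<not> ?thesis\<close> show False by simp
  qed
  moreover have "s \<in> S" "f s + \<eta> * dist s z \<le> f z"
    using s_P[of 0] by (simp_all add: P_def zs_def)
  moreover have "0 \<le> \<eta> * dist s z" using \<open>\<eta> > 0\<close> by simp
  ultimately show ?thesis using that by fastforce
qed

lemma almost_nearest_point_not_interior:
  fixes S :: "'a::real_normed_vector set"
  assumes opt: "\<And>y. y \<in> S \<Longrightarrow> dist x s \<le> dist x y + \<eta> * dist y s" and "\<eta> < 1" "x \<noteq> s"
  shows "s \<notin> interior S"
proof
  assume "s \<in> interior S"
  then obtain e where e: "e > 0" "ball s e \<subseteq> S" by (meson interior_subset open_contains_ball_eq open_interior subsetD subset_trans)
  define N where "N = dist x s"
  have "N > 0" using \<open>x \<noteq> s\<close> by (simp add: N_def)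
  define t where "t = min (1/2) (e / (2 * N))"
  have t: "0 < t" "t < 1" "t * N < e" using e \<open>N > 0\<close> by (auto simp: t_def min_def field_simps)
  define y where "y = s + t *\<^sub>R (x - s)"
  have "dist y s = t * N" using t by (simp add: y_def N_def dist_norm norm_minus_commute)
  moreover have "dist x y = (1 - t) * N"
  proof -
    have "x - y = (1 - t) *\<^sub>R (x - s)" by (simp add: y_def algebra_simps)
    then show ?thesis using t by (simp add: dist_norm N_def)
  qed
  moreover have "y \<in> S" using e t \<open>dist y s = t * N\<close> by (auto simp: dist_commute)
  ultimately have "N \<le> (1 - t) * N + \<eta> * (t * N)" using opt by (fastforce simp: N_def)
  then have "t * N * 1 \<le> t * N * \<eta>" by (simp add: algebra_simps)
  then show False using t \<open>N > 0\<close> \<open>\<eta> < 1\<close> by (simp add: mult_le_cancel_left_pos)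
qed

text \<open>At an almost nearest point, tangent directions cannot point much closer to \<open>x\<close>:
  move a small step \<open>t\<close> along an approximating sequence and let \<open>t \<rightarrow> 0\<close>.\<close>

lemma almost_nearest_point_tangent:
  fixes S :: "'a::real_normed_vector set"
  assumes opt: "\<And>y. y \<in> S \<Longrightarrow> dist x s \<le> dist x y + \<eta> * dist y s"
    and v: "v \<in> bouligand_cone S s"
  shows "dist x s - \<eta> * norm v \<le> norm (x - s - v)"
proof -
  let ?N = "dist x s"
  obtain vs ts where vs: "vs \<longlonglongrightarrow> v" and ts: "ts \<longlonglongrightarrow> 0" "\<forall>n. ts n > 0"
    and in_S: "\<forall>n. s + ts n *\<^sub>R vs n \<in> S"
    using v by (auto simp: bouligand_cone_def)
  have "(\<lambda>n. ?N - norm (v - vs n) - \<eta> * norm (vs n)) \<longlonglongrightarrow> ?N - norm (v - v) - \<eta> * norm v"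
    by (intro tendsto_intros vs)
  then have lim: "(\<lambda>n. ?N - norm (v - vs n) - \<eta> * norm (vs n)) \<longlonglongrightarrow> ?N - \<eta> * norm v" by simp
  have "\<forall>\<^sub>F n in sequentially. ts n < 1" using ts(1) by (rule order_tendstoD) simp
  then have "\<forall>\<^sub>F n in sequentially. ?N - norm (v - vs n) - \<eta> * norm (vs n) \<le> norm (x - s - v)"
  proof eventually_elim
    case (elim n)
    define t where "t = ts n"
    have t: "0 < t" "t < 1" using elim ts(2) by (auto simp: t_def)
    have "x - (s + t *\<^sub>R vs n) = (1 - t) *\<^sub>R (x - s) + t *\<^sub>R (x - s - v) + t *\<^sub>R (v - vs n)"
      by (simp add: algebra_simps)
    then have "dist x (s + t *\<^sub>R vs n) \<le> (1 - t) * ?N + t * norm (x - s - v) + t * norm (v - vs n)"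
      using t norm_triangle_ineq[of "(1 - t) *\<^sub>R (x - s) + t *\<^sub>R (x - s - v)" "t *\<^sub>R (v - vs n)"]
        norm_triangle_ineq[of "(1 - t) *\<^sub>R (x - s)" "t *\<^sub>R (x - s - v)"]
      by (simp add: dist_norm)
    moreover have "?N \<le> dist x (s + t *\<^sub>R vs n) + \<eta> * (t * norm (vs n))"
      using opt[of "s + t *\<^sub>R vs n"] in_S t by (simp add: t_def dist_norm)
    ultimately have "t * ?N \<le> t * (norm (x - s - v) + norm (v - vs n) + \<eta> * norm (vs n))"
      by (simp add: algebra_simps)
    then show ?case using t by simp
  qed
  then show ?thesis using tendsto_upperbound[OF lim _ sequentially_bot] by blast
qed

lemma infdist_tangent_ge_almost_nearest:
  fixes S :: "'a::real_normed_vector set"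
  assumes "s \<in> S" and opt: "\<And>y. y \<in> S \<Longrightarrow> dist x s \<le> dist x y + \<eta> * dist y s" and "\<eta> > 0"
  shows "(1 - 2 * \<eta>) * dist x s \<le> infdist (x - s) (bouligand_cone S s)"
  unfolding infdist_notempty[OF bouligand_cone_nonempty[OF \<open>s \<in> S\<close>]]
proof (rule cINF_greatest[OF bouligand_cone_nonempty[OF \<open>s \<in> S\<close>]])
  fix v assume v: "v \<in> bouligand_cone S s"
  let ?N = "dist x s"
  have near: "?N - \<eta> * norm v \<le> norm (x - s - v)" using opt v by (rule almost_nearest_point_tangent)
  have far: "norm v - ?N \<le> norm (x - s - v)"
    using norm_triangle_ineq3[of v "x - s"] by (simp add: dist_norm norm_minus_commute)
  show "(1 - 2 * \<eta>) * ?N \<le> dist (x - s) v"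
  proof (cases "norm v \<le> 2 * ?N")
    case True
    then have "\<eta> * norm v \<le> \<eta> * (2 * ?N)" using \<open>\<eta> > 0\<close> by simp
    then show ?thesis using near by (simp add: dist_norm algebra_simps)
  next
    case False
    moreover have "0 \<le> \<eta> * (2 * ?N)" using \<open>\<eta> > 0\<close> by simp
    ultimately show ?thesis using far by (simp add: dist_norm algebra_simps)
  qed
qed

section \<open>Necessity of the excess condition\<close>

lemma error_bound_approximates_direction:
  fixes \<phi> :: "'a::real_normed_vector \<Rightarrow> ereal"
  assumes "x \<in> S" "\<phi> x = 0"
    and "r > 0" and eb: "\<And>y. y \<in> ball x r \<Longrightarrow> ereal (infdist y S) \<le> ereal \<tau> * max (\<phi> y) 0"
    and "\<tau> > 0" and "hadamard_dd \<phi> x h \<le> 1" and "0 < \<epsilon>" "\<epsilon> < 1" "\<rho> > 0"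
  obtains t s where "0 < t" "t < \<rho>" "s \<in> S" "dist h ((1 / t) *\<^sub>R (s - x)) < \<tau> * (1 + \<epsilon>) + 2 * \<epsilon>"
proof -
  have "hadamard_dd \<phi> x h < ereal (1 + \<epsilon>)" using assms(6) \<open>0 < \<epsilon>\<close> by (simp add: le_less_trans)
  moreover have "min \<rho> (r / (norm h + 1)) > 0" using \<open>\<rho> > 0\<close> \<open>r > 0\<close> by (simp add: add_nonneg_pos)
  ultimately obtain t h' where "0 < t" "t < \<rho>" "t < r / (norm h + 1)" and "dist h' h < \<epsilon>"
    and slope: "(\<phi> (x + t *\<^sub>R h') - \<phi> x) / ereal t < ereal (1 + \<epsilon>)"
    using hadamard_dd_less_obtain \<open>0 < \<epsilon>\<close> by (metis min_less_iff_conj)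
  define y where "y = x + t *\<^sub>R h'"
  have \<phi>y: "\<phi> y < ereal ((1 + \<epsilon>) * t)"
    using slope \<open>0 < t\<close> \<open>\<phi> x = 0\<close> by (simp add: y_def ereal_divide_less_iff mult.commute)
  have "norm h' \<le> norm h + 1"
    using \<open>dist h' h < \<epsilon>\<close> \<open>\<epsilon> < 1\<close> norm_triangle_ineq2[of h' h] by (simp add: dist_norm)
  then have "dist y x \<le> t * (norm h + 1)" using \<open>0 < t\<close> by (simp add: y_def dist_norm mult_left_mono)
  also have "\<dots> < r" using \<open>t < r / (norm h + 1)\<close> by (simp add: add_nonneg_pos pos_less_divide_eq)
  finally have "ereal (infdist y S) \<le> ereal \<tau> * max (\<phi> y) 0" by (intro eb) (simp add: dist_commute)
  also have "\<dots> \<le> ereal \<tau> * ereal ((1 + \<epsilon>) * t)"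
    using \<phi>y \<open>0 < t\<close> \<open>0 < \<epsilon>\<close> \<open>\<tau> > 0\<close> by (intro ereal_mult_left_mono) auto
  finally have "infdist y S \<le> \<tau> * (1 + \<epsilon>) * t" by simp
  moreover obtain s where "s \<in> S" "dist y s < infdist y S + \<epsilon> * t"
    using infdist_less_obtain[of S "\<epsilon> * t" y] \<open>x \<in> S\<close> \<open>0 < \<epsilon>\<close> \<open>0 < t\<close> by auto
  ultimately have "dist y s < (\<tau> * (1 + \<epsilon>) + \<epsilon>) * t" by (simp add: algebra_simps)
  have "h' - (1 / t) *\<^sub>R (s - x) = (1 / t) *\<^sub>R (y - s)"
    using \<open>0 < t\<close> by (simp add: y_def algebra_simps)
  then have "dist h' ((1 / t) *\<^sub>R (s - x)) = dist y s / t" using \<open>0 < t\<close> by (simp add: dist_norm)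
  also have "\<dots> < \<tau> * (1 + \<epsilon>) + \<epsilon>"
    using \<open>dist y s < (\<tau> * (1 + \<epsilon>) + \<epsilon>) * t\<close> \<open>0 < t\<close> by (simp add: pos_divide_less_eq)
  finally have "dist h' ((1 / t) *\<^sub>R (s - x)) < \<tau> * (1 + \<epsilon>) + \<epsilon>" .
  then have "dist h ((1 / t) *\<^sub>R (s - x)) < \<tau> * (1 + \<epsilon>) + 2 * \<epsilon>"
    using \<open>dist h' h < \<epsilon>\<close> dist_triangle[of h "(1 / t) *\<^sub>R (s - x)" h'] by (simp add: dist_commute)
  then show ?thesis using that \<open>0 < t\<close> \<open>t < \<rho>\<close> \<open>s \<in> S\<close> by blast
qed

lemma infdist_tangent_le_of_error_bound:
  fixes \<phi> :: "'a::real_normed_vector \<Rightarrow> ereal"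
  assumes "x \<in> S" "\<phi> x = 0" and shapiro: "shapiro_at S x"
    and "r > 0" "\<And>y. y \<in> ball x r \<Longrightarrow> ereal (infdist y S) \<le> ereal \<tau> * max (\<phi> y) 0"
    and "\<tau> > 0" "hadamard_dd \<phi> x h \<le> 1"
  shows "infdist h (bouligand_cone S x) \<le> \<tau>"
proof (rule field_le_epsilon)
  fix e :: real assume "e > 0"
  let ?T = "bouligand_cone S x"
  define M where "M = norm h + 2 * \<tau> + 2"
  define \<epsilon> where "\<epsilon> = min (1/2) (e / (M + \<tau> + 2))"
  have "M > 0" using \<open>\<tau> > 0\<close> norm_ge_zero[of h] unfolding M_def by linarith
  then have "M + \<tau> + 2 > 0" using \<open>\<tau> > 0\<close> by simp
  then have "0 < \<epsilon>" "\<epsilon> < 1" using \<open>e > 0\<close> by (auto simp: \<epsilon>_def)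
  have "\<epsilon> \<le> e / (M + \<tau> + 2)" by (simp add: \<epsilon>_def)
  then have "\<epsilon> * (M + \<tau> + 2) \<le> e" using \<open>M + \<tau> + 2 > 0\<close> by (simp add: pos_le_divide_eq)
  obtain \<delta> where "\<delta> > 0" and tangent: "\<And>s. s \<in> S \<inter> ball x \<delta> \<Longrightarrow> infdist (s - x) ?T \<le> \<epsilon> * norm (s - x)"
    using shapiro \<open>0 < \<epsilon>\<close> \<open>x \<in> S\<close> unfolding shapiro_at_def by (meson IntI centre_in_ball)
  obtain t s where "0 < t" "t < \<delta> / M" "s \<in> S"
    and close: "dist h ((1 / t) *\<^sub>R (s - x)) < \<tau> * (1 + \<epsilon>) + 2 * \<epsilon>"
    using error_bound_approximates_direction[OF assms(1,2,4,5,6,7) \<open>0 < \<epsilon>\<close> \<open>\<epsilon> < 1\<close>, of "\<delta> / M"]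
      \<open>\<delta> > 0\<close> \<open>M > 0\<close> by auto
  define v where "v = (1 / t) *\<^sub>R (s - x)"
  have "\<epsilon> * \<tau> \<le> \<tau>" using \<open>\<epsilon> < 1\<close> \<open>\<tau> > 0\<close> by simp
  then have "dist h v \<le> 2 * \<tau> + 2" using close \<open>\<epsilon> < 1\<close> by (simp add: v_def algebra_simps)
  then have "norm v \<le> M"
    using norm_triangle_ineq2[of v h] by (simp add: M_def dist_norm norm_minus_commute)
  have "norm (s - x) = t * norm v" using \<open>0 < t\<close> by (simp add: v_def)
  also have "\<dots> \<le> t * M" using \<open>norm v \<le> M\<close> \<open>0 < t\<close> by simp
  also have "\<dots> < \<delta>" using \<open>t < \<delta> / M\<close> \<open>M > 0\<close> by (simp add: pos_less_divide_eq)
  finally have "norm (s - x) < \<delta>" .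
  then have "infdist (s - x) ?T \<le> \<epsilon> * norm (s - x)"
    using tangent \<open>s \<in> S\<close> by (simp add: dist_norm norm_minus_commute)
  have "infdist v ?T \<le> (1 / t) * infdist (s - x) ?T"
    unfolding v_def using \<open>x \<in> S\<close> \<open>0 < t\<close> by (intro infdist_bouligand_cone_scaleR_le) auto
  also have "\<dots> \<le> (1 / t) * (\<epsilon> * norm (s - x))"
    using \<open>infdist (s - x) ?T \<le> \<epsilon> * norm (s - x)\<close> \<open>0 < t\<close> by (intro mult_left_mono) auto
  also have "\<dots> = \<epsilon> * norm v" using \<open>0 < t\<close> by (simp add: v_def)
  finally have "infdist v ?T \<le> \<epsilon> * norm v" .
  then have "infdist h ?T \<le> \<epsilon> * M + (\<tau> * (1 + \<epsilon>) + 2 * \<epsilon>)"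
    using infdist_triangle[of h ?T v] close \<open>norm v \<le> M\<close> \<open>0 < \<epsilon>\<close> mult_left_mono[of "norm v" M \<epsilon>]
    by (simp add: v_def)
  also have "\<dots> = \<tau> + \<epsilon> * (M + \<tau> + 2)" by (simp add: algebra_simps)
  finally show "infdist h ?T \<le> \<tau> + e" using \<open>\<epsilon> * (M + \<tau> + 2) \<le> e\<close> by linarith
qed

lemma limsup_excess_le_of_error_bound:
  fixes \<phi> :: "'a::real_normed_vector \<Rightarrow> ereal"
  assumes "lsc \<phi>" and frontier: "frontier (sublevel0 \<phi>) \<subseteq> \<phi> -` {0}"
    and "shapiro_around (sublevel0 \<phi>) xb" and "\<tau> > 0" and "error_bound_with \<phi> xb \<tau>"
  shows "limsup_within (frontier (sublevel0 \<phi>)) xb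
           (\<lambda>x. excess {h. hadamard_dd \<phi> x h \<le> 1} (bouligand_cone (sublevel0 \<phi>) x)) \<le> ereal \<tau>"
proof -
  let ?S = "sublevel0 \<phi>"
  obtain \<delta> where "\<delta> > 0" and eb: "\<forall>y\<in>ball xb \<delta>. ereal (infdist y ?S) \<le> ereal \<tau> * max (\<phi> y) 0"
    using assms(5) by (auto simp: error_bound_with_def)
  obtain U where "open U" "xb \<in> U" and shapiro: "\<forall>u\<in>?S \<inter> U. shapiro_at ?S u"
    using assms(3) by (auto simp: shapiro_around_def)
  then obtain e where "e > 0" "ball xb e \<subseteq> U" using open_contains_ball by blast
  show ?thesis
  proof (rule limsup_within_le)
    show "min \<delta> e > 0" using \<open>\<delta> > 0\<close> \<open>e > 0\<close> by simp
    show "0 \<le> ereal \<tau>" using \<open>\<tau> > 0\<close> by simp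
    fix x assume x: "x \<in> frontier ?S \<inter> ball xb (min \<delta> e)"
    then have "x \<in> ?S" using closed_sublevel0[OF \<open>lsc \<phi>\<close>] frontier_subset_closed by blast
    have "\<phi> x = 0" using x frontier by auto
    have "shapiro_at ?S x" using x \<open>x \<in> ?S\<close> \<open>ball xb e \<subseteq> U\<close> shapiro by auto
    have "ereal (infdist y ?S) \<le> ereal \<tau> * max (\<phi> y) 0" if "y \<in> ball x (\<delta> - dist xb x)" for y
      using eb that dist_triangle[of xb y x] by auto
    then have "infdist h (bouligand_cone ?S x) \<le> \<tau>" if "hadamard_dd \<phi> x h \<le> 1" for h
      using infdist_tangent_le_of_error_bound[where r = "\<delta> - dist xb x" and \<phi> = \<phi> and S = ?S, OF \<open>x \<in> ?S\<close> \<open>\<phi> x = 0\<close>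
          \<open>shapiro_at ?S x\<close>] x \<open>\<tau> > 0\<close> that by auto
    then show "excess {h. hadamard_dd \<phi> x h \<le> 1} (bouligand_cone ?S x) \<le> ereal \<tau>"
      using \<open>\<tau> > 0\<close> by (intro excess_le bouligand_cone_nonempty[OF \<open>x \<in> ?S\<close>]) auto
  qed
qed

section \<open>Sufficiency of the excess condition\<close>

lemma infdist_tangent_le_of_epi_tangent:
  fixes \<phi> :: "'a::real_normed_vector \<Rightarrow> ereal"
  assumes "s \<in> S" "\<phi> s = 0" and tangent: "(h, \<alpha>) \<in> bouligand_cone (epi \<phi>) (s, 0)"
    and "\<beta> > 0" "\<alpha> \<le> \<beta>"
    and slope: "\<And>h. hadamard_dd \<phi> s h \<le> 1 \<Longrightarrow> infdist h (bouligand_cone S s) \<le> L"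
  shows "infdist h (bouligand_cone S s) \<le> \<beta> * L"
proof -
  have "(1 / \<beta>) *\<^sub>R (h, \<alpha>) \<in> bouligand_cone (epi \<phi>) (s, 0)"
    using tangent \<open>\<beta> > 0\<close> by (intro bouligand_cone_scaleR) auto
  then have "hadamard_dd \<phi> s ((1 / \<beta>) *\<^sub>R h) \<le> ereal (\<alpha> / \<beta>)"
    using hadamard_dd_le_of_epi_tangent[where \<phi> = \<phi> and s = s, OF \<open>\<phi> s = 0\<close>] by simp
  also have "\<dots> \<le> 1" using \<open>\<beta> > 0\<close> \<open>\<alpha> \<le> \<beta>\<close> by simp
  finally have "infdist ((1 / \<beta>) *\<^sub>R h) (bouligand_cone S s) \<le> L" by (rule slope)
  moreover have "infdist h (bouligand_cone S s) \<le> \<beta> * infdist ((1 / \<beta>) *\<^sub>R h) (bouligand_cone S s)"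
    using infdist_bouligand_cone_scaleR_le[OF \<open>s \<in> S\<close> \<open>\<beta> > 0\<close>, of "(1 / \<beta>) *\<^sub>R h"] \<open>\<beta> > 0\<close> by simp
  ultimately show ?thesis using \<open>\<beta> > 0\<close> by (meson mult_left_mono less_imp_le order_trans)
qed

lemma almost_nearest_point_epi_estimate:
  fixes \<phi> :: "'a::real_normed_vector \<Rightarrow> ereal"
  assumes "s \<in> S" "\<phi> s = 0" and opt: "\<And>y. y \<in> S \<Longrightarrow> dist x s \<le> dist x y + \<eta> * dist y s"
    and "\<eta> > 0" "\<epsilon> > 0" "0 \<le> a" "x \<noteq> s"
    and epi_tangent: "(INF w\<in>bouligand_cone (epi \<phi>) (s, 0). sum_norm ((x, a) - (s, 0) - w))
                        \<le> \<epsilon> * sum_norm ((x, a) - (s, 0))"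
    and slope: "\<And>h. hadamard_dd \<phi> s h \<le> 1 \<Longrightarrow> infdist h (bouligand_cone S s) \<le> L" and "0 \<le> L"
  shows "(1 - 2 * \<eta>) * dist x s \<le> \<epsilon> * (2 * dist x s + a) + (a + \<epsilon> * (3 * dist x s + a)) * L"
proof -
  let ?N = "dist x s" and ?T = "bouligand_cone (epi \<phi>) (s, 0)"
  have "?N > 0" using \<open>x \<noteq> s\<close> by simp
  have "(s, 0) \<in> epi \<phi>" using \<open>\<phi> s = 0\<close> by (simp add: epi_def)
  have "sum_norm ((x, a) - (s, 0)) = ?N + a" using \<open>0 \<le> a\<close> by (simp add: sum_norm_def dist_norm)
  then have "(INF w\<in>?T. sum_norm ((x, a) - (s, 0) - w)) \<le> \<epsilon> * (?N + a)" using epi_tangent by simp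
  moreover have "\<epsilon> * ?N > 0" using \<open>\<epsilon> > 0\<close> \<open>?N > 0\<close> by simp
  ultimately have "(INF w\<in>?T. sum_norm ((x, a) - (s, 0) - w)) < \<epsilon> * (?N + a) + \<epsilon> * ?N" by linarith
  moreover have "bdd_below ((\<lambda>w. sum_norm ((x, a) - (s, 0) - w)) ` ?T)"
    by (rule bdd_belowI[of _ 0]) (auto simp: sum_norm_def)
  ultimately obtain w where "w \<in> ?T" and w: "sum_norm ((x, a) - (s, 0) - w) < \<epsilon> * (?N + a) + \<epsilon> * ?N"
    using cINF_less_iff[OF bouligand_cone_nonempty[OF \<open>(s, 0) \<in> epi \<phi>\<close>]] by blast
  obtain h \<alpha> where "w = (h, \<alpha>)" by fastforce
  then have tangent: "(h, \<alpha>) \<in> ?T" and close: "norm (x - s - h) + \<bar>a - \<alpha>\<bar> < \<epsilon> * (2 * ?N + a)"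
    using \<open>w \<in> ?T\<close> w by (simp_all add: sum_norm_def algebra_simps)
  define \<beta> where "\<beta> = max \<alpha> 0 + \<epsilon> * ?N"
  have "\<beta> > 0" "\<alpha> \<le> \<beta>" using \<open>\<epsilon> * ?N > 0\<close> by (auto simp: \<beta>_def add_nonneg_pos)
  have "(1 - 2 * \<eta>) * ?N \<le> infdist (x - s) (bouligand_cone S s)"
    using \<open>s \<in> S\<close> opt \<open>\<eta> > 0\<close> by (rule infdist_tangent_ge_almost_nearest)
  also have "\<dots> \<le> infdist h (bouligand_cone S s) + norm (x - s - h)"
    using infdist_triangle[of "x - s" _ h] by (simp add: dist_norm)
  also have "\<dots> \<le> \<beta> * L + norm (x - s - h)"
    using infdist_tangent_le_of_epi_tangent[OF \<open>s \<in> S\<close> \<open>\<phi> s = 0\<close> tangent \<open>\<beta> > 0\<close> \<open>\<alpha> \<le> \<beta>\<close> slope] by simp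
  also have "\<beta> * L \<le> (a + \<epsilon> * (3 * ?N + a)) * L"
  proof (rule mult_right_mono[OF _ \<open>0 \<le> L\<close>])
    have "max \<alpha> 0 \<le> a + \<bar>a - \<alpha>\<bar>" using \<open>0 \<le> a\<close> by linarith
    moreover have "\<bar>a - \<alpha>\<bar> < \<epsilon> * (2 * ?N + a)" using close norm_ge_zero[of "x - s - h"] by linarith
    moreover have "\<epsilon> * (3 * ?N + a) = \<epsilon> * (2 * ?N + a) + \<epsilon> * ?N" by (simp add: algebra_simps)
    ultimately show "\<beta> \<le> a + \<epsilon> * (3 * ?N + a)" unfolding \<beta>_def by linarith
  qed
  finally show ?thesis using close by linarith
qed

lemma le_of_almost_nearest_point_estimate:
  fixes N a \<tau> \<eta> \<epsilon> L :: real
  assumes "\<tau> > 0" "0 \<le> a" "0 \<le> \<epsilon>" "0 \<le> L"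
    and estimate: "(1 - 2 * \<eta>) * N \<le> \<epsilon> * (2 * N + a) + (a + \<epsilon> * (3 * N + a)) * L"
    and small: "2 * \<eta> + \<epsilon> * (3 + 1 / \<tau>) * (1 + L) < 1 - L / \<tau>"
  shows "N \<le> \<tau> * a"
proof -
  define k where "k = 1 - 2 * \<eta> - \<epsilon> * (2 + 3 * L)"
  define c where "c = L + \<epsilon> * (1 + L)"
  have "N * k \<le> a * c" using estimate by (simp add: k_def c_def algebra_simps)
  have "(2 * \<eta> + \<epsilon> * (3 + 1 / \<tau>) * (1 + L)) * \<tau> < (1 - L / \<tau>) * \<tau>"
    using small \<open>\<tau> > 0\<close> by (rule mult_strict_right_mono)
  moreover have "(2 * \<eta> + \<epsilon> * (3 + 1 / \<tau>) * (1 + L)) * \<tau> = c + \<epsilon> * \<tau> + \<tau> * (2 * \<eta> + \<epsilon> * (2 + 3 * L)) - L"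
    using \<open>\<tau> > 0\<close> by (simp add: c_def field_simps)
  moreover have "(1 - L / \<tau>) * \<tau> = \<tau> - L" using \<open>\<tau> > 0\<close> by (simp add: field_simps)
  ultimately have "c + \<epsilon> * \<tau> < \<tau> * k" by (simp add: k_def algebra_simps)
  moreover have "0 \<le> \<epsilon> * \<tau>" "0 \<le> c" using assms(1,3,4) by (simp_all add: c_def)
  ultimately have "c < \<tau> * k" by linarith
  with \<open>0 \<le> c\<close> have "0 < \<tau> * k" by linarith
  with \<open>\<tau> > 0\<close> have "0 < k" by (simp add: zero_less_mult_iff)
  have "a * c \<le> a * (\<tau> * k)" using \<open>c < \<tau> * k\<close> \<open>0 \<le> a\<close> by (simp add: mult_left_mono)
  with \<open>N * k \<le> a * c\<close> have "N * k \<le> (\<tau> * a) * k" by (simp add: algebra_simps)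
  with \<open>0 < k\<close> show ?thesis by simp
qed

lemma infdist_sublevel0_le_of_epi_shapiro:
  fixes \<phi> :: "'a::banach \<Rightarrow> ereal"
  assumes closed: "closed (sublevel0 \<phi>)" and "xb \<in> sublevel0 \<phi>"
    and frontier: "frontier (sublevel0 \<phi>) \<subseteq> \<phi> -` {0}"
    and slope: "\<And>s h. s \<in> frontier (sublevel0 \<phi>) \<inter> ball xb r \<Longrightarrow> hadamard_dd \<phi> s h \<le> 1 \<Longrightarrow>
                  infdist h (bouligand_cone (sublevel0 \<phi>) s) \<le> L"
    and epi_shapiro: "\<And>p q. p \<in> epi \<phi> \<Longrightarrow> q \<in> epi \<phi> \<Longrightarrow> sum_norm (p - (xb, 0)) < r \<Longrightarrow>
                  sum_norm (q - (xb, 0)) < r \<Longrightarrow>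
                  (INF w\<in>bouligand_cone (epi \<phi>) q. sum_norm (p - q - w)) \<le> \<epsilon> * sum_norm (p - q)"
    and "\<tau> > 0" "0 \<le> L" "\<eta> > 0" "\<epsilon> > 0"
    and small: "2 * \<eta> + \<epsilon> * (3 + 1 / \<tau>) * (1 + L) < 1 - L / \<tau>"
    and "\<phi> x = ereal a" "a > 0" and near: "dist x xb * (2 + 1 / \<tau>) < r"
  shows "infdist x (sublevel0 \<phi>) \<le> \<tau> * a"
proof (rule ccontr)
  let ?S = "sublevel0 \<phi>"
  assume "\<not> infdist x ?S \<le> \<tau> * a"
  have "continuous_on ?S (dist x)" by (rule continuous_on_dist[OF continuous_on_const continuous_on_id])
  then obtain s where "s \<in> ?S" and "dist x s \<le> dist x xb"
    and opt: "\<And>y. y \<in> ?S \<Longrightarrow> dist x s \<le> dist x y + \<eta> * dist y s"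
    using ekeland_variational_principle[OF closed \<open>xb \<in> ?S\<close>, of "dist x" 0 \<eta>] \<open>\<eta> > 0\<close> by auto
  have "infdist x ?S \<le> dist x s" using \<open>s \<in> ?S\<close> by (rule infdist_le)
  then have "\<tau> * a < dist x s" using \<open>\<not> infdist x ?S \<le> \<tau> * a\<close> by simp
  moreover have "0 < \<tau> * a" using \<open>\<tau> > 0\<close> \<open>a > 0\<close> by simp
  ultimately have "x \<noteq> s" by auto
  have "\<eta> < 1"
    using small \<open>\<tau> > 0\<close> \<open>0 \<le> L\<close> \<open>\<epsilon> > 0\<close> by (smt (verit) divide_nonneg_pos mult_nonneg_nonneg)
  then have "s \<notin> interior ?S" using opt \<open>x \<noteq> s\<close> by (intro almost_nearest_point_not_interior)
  then have "s \<in> frontier ?S" using \<open>s \<in> ?S\<close> closed by (simp add: frontier_def closure_closed)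
  then have "\<phi> s = 0" using frontier by auto
  have "dist x xb \<ge> 0" "\<tau> * a < dist x xb"
    using \<open>\<tau> * a < dist x s\<close> \<open>dist x s \<le> dist x xb\<close> by simp_all
  moreover have "dist x xb * (2 + 1 / \<tau>) = 2 * dist x xb + dist x xb / \<tau>" by (simp add: algebra_simps)
  moreover have "a < dist x xb / \<tau>" "0 \<le> dist x xb / \<tau>"
    using \<open>\<tau> * a < dist x xb\<close> \<open>\<tau> > 0\<close> by (simp_all add: field_simps)
  ultimately have "dist s xb < r" "dist x xb + a < r"
    using near \<open>dist x s \<le> dist x xb\<close> dist_triangle[of s xb x] dist_commute[of s x] by linarith+
  have "(INF w\<in>bouligand_cone (epi \<phi>) (s, 0). sum_norm ((x, a) - (s, 0) - w))
          \<le> \<epsilon> * sum_norm ((x, a) - (s, 0))"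
    using \<open>\<phi> x = ereal a\<close> \<open>\<phi> s = 0\<close> \<open>a > 0\<close> \<open>dist s xb < r\<close> \<open>dist x xb + a < r\<close>
    by (intro epi_shapiro) (simp_all add: epi_def sum_norm_def dist_norm)
  moreover have "infdist h (bouligand_cone ?S s) \<le> L" if "hadamard_dd \<phi> s h \<le> 1" for h
    using slope[OF _ that] \<open>s \<in> frontier ?S\<close> \<open>dist s xb < r\<close> by (simp add: dist_commute)
  ultimately have "(1 - 2 * \<eta>) * dist x s \<le> \<epsilon> * (2 * dist x s + a) + (a + \<epsilon> * (3 * dist x s + a)) * L"
    using almost_nearest_point_epi_estimate[where \<phi> = \<phi> and s = s and S = ?S, OF \<open>s \<in> ?S\<close> \<open>\<phi> s = 0\<close> opt \<open>\<eta> > 0\<close> \<open>\<epsilon> > 0\<close> _ \<open>x \<noteq> s\<close>]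
      \<open>a > 0\<close> \<open>0 \<le> L\<close> by simp
  then have "dist x s \<le> \<tau> * a"
    using \<open>\<tau> > 0\<close> \<open>a > 0\<close> \<open>\<epsilon> > 0\<close> \<open>0 \<le> L\<close> small by (intro le_of_almost_nearest_point_estimate) auto
  with \<open>\<tau> * a < dist x s\<close> show False by simp
qed

lemma error_bound_withI:
  assumes "\<delta> > 0" "\<tau> > 0"
    and "\<And>x a. x \<in> ball xb \<delta> \<Longrightarrow> \<phi> x = ereal a \<Longrightarrow> a > 0 \<Longrightarrow> infdist x (sublevel0 \<phi>) \<le> \<tau> * a"
  shows "error_bound_with \<phi> xb \<tau>"
  unfolding error_bound_with_def
proof (intro exI[of _ \<delta>] conjI ballI \<open>\<delta> > 0\<close>)
  fix x assume x: "x \<in> ball xb \<delta>"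
  consider "\<phi> x \<le> 0" | "\<phi> x = \<infinity>" | a where "\<phi> x = ereal a" "a > 0"
  proof (cases "\<phi> x \<le> 0")
    case False
    then show thesis using that by (cases "\<phi> x") auto
  qed (rule that)
  then show "ereal (infdist x (sublevel0 \<phi>)) \<le> ereal \<tau> * max (\<phi> x) 0"
  proof cases
    case 1
    then show ?thesis using \<open>\<tau> > 0\<close> by (simp add: sublevel0_def)
  next
    case 2
    then show ?thesis using \<open>\<tau> > 0\<close> by simp
  next
    case 3
    then show ?thesis using assms(3)[OF x] by simp
  qed
qed

lemma error_bound_with_interior:
  assumes "xb \<in> interior (sublevel0 \<phi>)" "\<tau> > 0"
  shows "error_bound_with \<phi> xb \<tau>"
proof -
  let ?S = "sublevel0 \<phi>"
  obtain e where "e > 0" "ball xb e \<subseteq> interior ?S"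
    using assms(1) open_contains_ball_eq[OF open_interior] by blast
  show ?thesis
  proof (rule error_bound_withI[OF \<open>e > 0\<close> \<open>\<tau> > 0\<close>])
    fix x a assume "x \<in> ball xb e" "\<phi> x = ereal a" "a > 0"
    then have "x \<in> ?S" using \<open>ball xb e \<subseteq> interior ?S\<close> interior_subset by blast
    with \<open>\<phi> x = ereal a\<close> \<open>a > 0\<close> show "infdist x ?S \<le> \<tau> * a" by (simp add: sublevel0_def)
  qed
qed

lemma obtain_error_bound_parameters:
  fixes L \<tau> :: real
  assumes "0 \<le> L" "L < \<tau>"
  obtains \<eta> \<epsilon> where "\<eta> > 0" "\<epsilon> > 0" "2 * \<eta> + \<epsilon> * (3 + 1 / \<tau>) * (1 + L) < 1 - L / \<tau>"
proof -
  define g where "g = 1 - L / \<tau>"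
  define q where "q = (3 + 1 / \<tau>) * (1 + L)"
  have "\<tau> > 0" "g > 0" using assms by (simp_all add: g_def)
  then have "q > 0" using \<open>0 \<le> L\<close> by (simp add: q_def add_pos_nonneg)
  have "g / (4 * q) * (3 + 1 / \<tau>) * (1 + L) = g / (4 * q) * q" by (simp add: q_def)
  also have "\<dots> = g / 4" using \<open>q > 0\<close> by simp
  finally have "2 * (g / 4) + g / (4 * q) * (3 + 1 / \<tau>) * (1 + L) < 1 - L / \<tau>"
    using \<open>g > 0\<close> unfolding g_def[symmetric] by linarith
  moreover have "g / 4 > 0" "g / (4 * q) > 0" using \<open>g > 0\<close> \<open>q > 0\<close> by simp_all
  ultimately show ?thesis using that by blast
qed

lemma obtain_slope_bound_of_limsup_excess_less:
  fixes \<phi> :: "'a::real_normed_vector \<Rightarrow> ereal"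
  assumes closed: "closed (sublevel0 \<phi>)"
    and limsup: "limsup_within (frontier (sublevel0 \<phi>)) xb
                   (\<lambda>x. excess {h. hadamard_dd \<phi> x h \<le> 1} (bouligand_cone (sublevel0 \<phi>) x)) < ereal \<tau>"
  obtains L \<delta> where "0 \<le> L" "L < \<tau>" "\<delta> > 0" "\<And>s h. s \<in> frontier (sublevel0 \<phi>) \<inter> ball xb \<delta> \<Longrightarrow>
      hadamard_dd \<phi> s h \<le> 1 \<Longrightarrow> infdist h (bouligand_cone (sublevel0 \<phi>) s) \<le> L"
proof -
  let ?S = "sublevel0 \<phi>"
  obtain L where L: "limsup_within (frontier ?S) xb
      (\<lambda>x. excess {h. hadamard_dd \<phi> x h \<le> 1} (bouligand_cone ?S x)) < ereal L" "L < \<tau>"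
    using ereal_dense2[OF limsup] by auto
  have "0 \<le> limsup_within (frontier ?S) xb
      (\<lambda>x. excess {h. hadamard_dd \<phi> x h \<le> 1} (bouligand_cone ?S x))"
    by (intro limsup_within_nonneg excess_nonneg)
  then have "0 < ereal L" using L(1) by (rule order.strict_trans1)
  obtain \<delta> where "\<delta> > 0" and excess_less: "\<And>s. s \<in> frontier ?S \<inter> ball xb \<delta> \<Longrightarrow>
      excess {h. hadamard_dd \<phi> s h \<le> 1} (bouligand_cone ?S s) < ereal L"
    using limsup_within_less_obtain[OF L(1)] by blast
  show ?thesis
  proof (rule that[of L \<delta>])
    show "0 \<le> L" using \<open>0 < ereal L\<close> by simp
    fix s h assume s: "s \<in> frontier ?S \<inter> ball xb \<delta>" and h: "hadamard_dd \<phi> s h \<le> 1"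
    then have "s \<in> ?S" using closed frontier_subset_closed by blast
    have "ereal (infdist h (bouligand_cone ?S s)) \<le> excess {h. hadamard_dd \<phi> s h \<le> 1} (bouligand_cone ?S s)"
      using h by (intro infdist_le_excess bouligand_cone_nonempty[OF \<open>s \<in> ?S\<close>]) simp
    also have "\<dots> < ereal L" using excess_less[OF s] .
    finally show "infdist h (bouligand_cone ?S s) \<le> L" by simp
  qed (use \<open>L < \<tau>\<close> \<open>\<delta> > 0\<close> in simp_all)
qed

lemma error_bound_of_limsup_excess_less:
  fixes \<phi> :: "'a::banach \<Rightarrow> ereal"
  assumes "lsc \<phi>" "xb \<in> sublevel0 \<phi>" and frontier: "frontier (sublevel0 \<phi>) \<subseteq> \<phi> -` {0}"
    and "epi_shapiro_at \<phi> xb" "\<tau> > 0"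
    and limsup: "limsup_within (frontier (sublevel0 \<phi>)) xb
                   (\<lambda>x. excess {h. hadamard_dd \<phi> x h \<le> 1} (bouligand_cone (sublevel0 \<phi>) x)) < ereal \<tau>"
  shows "error_bound_with \<phi> xb \<tau>"
proof (cases "xb \<in> interior (sublevel0 \<phi>)")
  case True
  then show ?thesis using \<open>\<tau> > 0\<close> by (rule error_bound_with_interior)
next
  case False
  let ?S = "sublevel0 \<phi>"
  have closed: "closed ?S" using \<open>lsc \<phi>\<close> by (rule closed_sublevel0)
  then have "xb \<in> frontier ?S" using False \<open>xb \<in> ?S\<close> by (simp add: frontier_def closure_closed)
  then have "\<phi> xb = 0" using frontier by auto
  obtain L \<delta>0 where "0 \<le> L" "L < \<tau>" "\<delta>0 > 0" and slope: "\<And>s h. s \<in> frontier ?S \<inter> ball xb \<delta>0 \<Longrightarrow>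
      hadamard_dd \<phi> s h \<le> 1 \<Longrightarrow> infdist h (bouligand_cone ?S s) \<le> L"
    using obtain_slope_bound_of_limsup_excess_less[OF closed limsup] by blast
  obtain \<eta> \<epsilon> where "\<eta> > 0" "\<epsilon> > 0" and small: "2 * \<eta> + \<epsilon> * (3 + 1 / \<tau>) * (1 + L) < 1 - L / \<tau>"
    using \<open>0 \<le> L\<close> \<open>L < \<tau>\<close> by (rule obtain_error_bound_parameters)
  obtain \<delta>e where "\<delta>e > 0" and epi_shapiro: "\<forall>p\<in>epi \<phi>. \<forall>q\<in>epi \<phi>.
      sum_norm (p - (xb, 0)) < \<delta>e \<longrightarrow> sum_norm (q - (xb, 0)) < \<delta>e \<longrightarrow>
      (INF w\<in>bouligand_cone (epi \<phi>) q. sum_norm (p - q - w)) \<le> \<epsilon> * sum_norm (p - q)"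
    using \<open>epi_shapiro_at \<phi> xb\<close> \<open>\<epsilon> > 0\<close> \<open>\<phi> xb = 0\<close> unfolding epi_shapiro_at_def Let_def by auto
  define r where "r = min \<delta>0 \<delta>e"
  have slope_r: "infdist h (bouligand_cone ?S s) \<le> L"
    if "s \<in> frontier ?S \<inter> ball xb r" "hadamard_dd \<phi> s h \<le> 1" for s h
    using slope that by (simp add: r_def)
  have epi_shapiro_r: "(INF w\<in>bouligand_cone (epi \<phi>) q. sum_norm (p - q - w)) \<le> \<epsilon> * sum_norm (p - q)"
    if "p \<in> epi \<phi>" "q \<in> epi \<phi>" "sum_norm (p - (xb, 0)) < r" "sum_norm (q - (xb, 0)) < r" for p q
    using epi_shapiro that by (simp add: r_def)
  have "0 < 2 + 1 / \<tau>" using \<open>\<tau> > 0\<close> by (simp add: add_pos_pos)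
  show ?thesis
  proof (rule error_bound_withI)
    show "r / (2 + 1 / \<tau>) > 0" using \<open>\<delta>0 > 0\<close> \<open>\<delta>e > 0\<close> \<open>0 < 2 + 1 / \<tau>\<close> by (simp add: r_def)
    fix x a assume "x \<in> ball xb (r / (2 + 1 / \<tau>))" "\<phi> x = ereal a" "a > 0"
    then have "dist x xb * (2 + 1 / \<tau>) < r" using \<open>0 < 2 + 1 / \<tau>\<close> by (simp add: dist_commute pos_less_divide_eq)
    with closed \<open>xb \<in> ?S\<close> frontier slope_r epi_shapiro_r \<open>\<tau> > 0\<close> \<open>0 \<le> L\<close> \<open>\<eta> > 0\<close> \<open>\<epsilon> > 0\<close>
      small \<open>\<phi> x = ereal a\<close> \<open>a > 0\<close>
    show "infdist x ?S \<le> \<tau> * a" by (rule infdist_sublevel0_le_of_epi_shapiro)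
  qed (use \<open>\<tau> > 0\<close> in simp)
qed

lemma threshold_of_admissible_constants:
  fixes L :: ereal and P :: "real \<Rightarrow> bool"
  assumes "0 \<le> L"
    and upper: "\<And>\<tau>. \<tau> > 0 \<Longrightarrow> P \<tau> \<Longrightarrow> L \<le> ereal \<tau>"
    and lower: "\<And>\<tau>. \<tau> > 0 \<Longrightarrow> L < ereal \<tau> \<Longrightarrow> P \<tau>"
  shows "(\<exists>\<tau>>0. P \<tau>) \<longleftrightarrow> L < \<infinity>" and "Inf (ereal ` {\<tau>. \<tau> > 0 \<and> P \<tau>}) = L"
proof -
  show "(\<exists>\<tau>>0. P \<tau>) \<longleftrightarrow> L < \<infinity>"
  proof
    assume "\<exists>\<tau>>0. P \<tau>"
    then show "L < \<infinity>" using upper by fastforce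
  next
    assume "L < \<infinity>"
    then obtain l where "L = ereal l" using \<open>0 \<le> L\<close> by (cases L) auto
    then have "P (l + 1)" "l + 1 > 0" using \<open>0 \<le> L\<close> by (auto intro: lower)
    then show "\<exists>\<tau>>0. P \<tau>" by blast
  qed
  show "Inf (ereal ` {\<tau>. \<tau> > 0 \<and> P \<tau>}) = L"
  proof (rule antisym)
    show "Inf (ereal ` {\<tau>. \<tau> > 0 \<and> P \<tau>}) \<le> L"
    proof (cases L)
      case (real l)
      show ?thesis
      proof (rule ereal_le_epsilon2)
        fix e :: real assume "e > 0"
        then have "l + e > 0" "P (l + e)" using real \<open>0 \<le> L\<close> by (auto intro: lower)
        then have "Inf (ereal ` {\<tau>. \<tau> > 0 \<and> P \<tau>}) \<le> ereal (l + e)" by (intro Inf_lower) auto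
        then show "Inf (ereal ` {\<tau>. \<tau> > 0 \<and> P \<tau>}) \<le> L + ereal e" using real by simp
      qed
    qed (use \<open>0 \<le> L\<close> in simp_all)
  qed (auto intro: Inf_greatest upper)
qed

theorem theorem4p2:
  fixes \<phi> :: "'a::banach \<Rightarrow> ereal" and xb :: 'a
  assumes "proper_fun \<phi>" and "lsc \<phi>"
    and "xb \<in> sublevel0 \<phi>"
    and "frontier (sublevel0 \<phi>) \<subseteq> \<phi> -` {0}"
    and "epi_shapiro_at \<phi> xb"
    and "shapiro_around (sublevel0 \<phi>) xb"
  shows "(local_error_bound \<phi> xb \<longleftrightarrow>
           limsup_within (frontier (sublevel0 \<phi>)) xb
             (\<lambda>x. excess {h. hadamard_dd \<phi> x h \<le> 1} (bouligand_cone (sublevel0 \<phi>) x)) < \<infinity>) \<and>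
         eb_modulus \<phi> xb =
           limsup_within (frontier (sublevel0 \<phi>)) xb
             (\<lambda>x. excess {h. hadamard_dd \<phi> x h \<le> 1} (bouligand_cone (sublevel0 \<phi>) x))"
proof -
  let ?L = "limsup_within (frontier (sublevel0 \<phi>)) xb
              (\<lambda>x. excess {h. hadamard_dd \<phi> x h \<le> 1} (bouligand_cone (sublevel0 \<phi>) x))"
  have "0 \<le> ?L" by (intro limsup_within_nonneg excess_nonneg)
  moreover have "?L \<le> ereal \<tau>" if "\<tau> > 0" "error_bound_with \<phi> xb \<tau>" for \<tau>
    using limsup_excess_le_of_error_bound[OF assms(2,4,6) that] .
  moreover have "error_bound_with \<phi> xb \<tau>" if "\<tau> > 0" "?L < ereal \<tau>" for \<tau>
    using error_bound_of_limsup_excess_less[OF assms(2,3,4,5) that] .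
  ultimately show ?thesis
    unfolding local_error_bound_def eb_modulus_def by (blast dest: threshold_of_admissible_constants)
qed

end
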